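(* Assume $\theta_i<1$ for all $i$ and $\theta_j>0$ for some $j$. Then $\mathbf 1_n/n$ is an equilibrium social power of systems (A) and (B) (i.e. $F(\mathbf 1_n/n)=\mathbf 1_n/n$) if and only if $\Theta(I_n-\Theta)^{-1}\mathbf 1_n$ is a left eigenvector of $C$ with eigenvalue $1$, i.e. $C^T\Theta(I_n-\Theta)^{-1}\mathbf 1_n=\Theta(I_n-\Theta)^{-1}\mathbf 1_n$.
   Context: Let $n\ge 2$, $\mathbf 1_n$ the all-ones vector, $I_n$ the identity matrix, $\Delta_n=\{x\in\mathbb R^n: x\ge 0,\ \mathbf 1_n^Tx=1\}$. Let $C\in\mathbb R^{n\times n}$ be a nonnegative row-stochastic matrix with zero diagonal, $\theta=(\theta_1,\dots,\theta_n)\in[0,1]^n$, $\Theta=\mathrm{diag}(\theta)$, and for $x\in\mathbb R^n$, $W(x)=\mathrm{diag}(x)+(I_n-\mathrm{diag}(x))C$. System (A): $x(s+1)=F(x(s))$, $x(0)\in\Delta_n$, where $F(x)=(I_n-\Theta)(I_n-W(x)^T\Theta)^{-1}\mathbf 1_n/n$; an equilibrium is $x^*\in\Delta_n$ with $F(x^* )=x^*$. System (B): $V(k+1)=\Theta W(x(k))V(k)+I_n-\Theta$, $x(k+1)=V(k+1)^T\mathbf 1_n/n$, with $V(0)=I_n$, $x(0)\in\Delta_n$; an equilibrium is a pair $(V^*,x^* )$ with $V^*$ row-stochastic, $x^*\in\Delta_n$, $V^*=\Theta W(x^* )V^*+I_n-\Theta$, $x^*=(V^* )^T\mathbf 1_n/n$.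 The equilibrium social powers of (A) and (B) coincide (the fixed points of $F$). *)

theory Defs
  imports "HOL-Analysis.Analysis"
begin

definition ones :: "real ^ 'n" where "ones = (\<chi> i. 1)"

definition diagm :: "real ^ 'n \<Rightarrow> real ^ 'n ^ 'n" where
  "diagm x = (\<chi> i j. if i = j then x $ i else 0)"

definition row_stochastic :: "real ^ 'n ^ 'n \<Rightarrow> bool" where
  "row_stochastic C \<longleftrightarrow> (\<forall>i j. C $ i $ j \<ge> 0) \<and> (\<forall>i. (\<Sum>j\<in>UNIV. C $ i $ j) = 1)"

definition Wm :: "real ^ 'n ^ 'n \<Rightarrow> real ^ 'n \<Rightarrow> real ^ 'n ^ 'n" where
  "Wm C x = diagm x + (mat 1 - diagm x) ** C"

definition Fmap :: "real ^ 'n ^ 'n \<Rightarrow> real ^ 'n \<Rightarrow> real ^ 'n \<Rightarrow> real ^ 'n" where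
  "Fmap C \<theta> x = (mat 1 - diagm \<theta>) *v
     (matrix_inv (mat 1 - transpose (Wm C x) ** diagm \<theta>) *v ((1 / real CARD('n)) *\<^sub>R ones))"

end

theory Submission
  imports Defs
begin

(* At the uniform vector x = c 1 with c = 1/n one has W(x) = c I + (1 - c) C. Put
   z = Theta (I - Theta)^-1 1 and y = c (I - Theta)^-1 1 = c (1 + z). The matrix
   M = I - W(x)^T Theta is invertible because W(x)^T does not increase the l1-norm and every
   theta_i < 1, so F(c 1) = (I - Theta) M^-1 c 1 equals c 1 iff M y = c 1. Since Theta y = c z,
   a direct computation gives M y = c 1 + c (1 - c) (z - C^T z), and c (1 - c) <> 0 for n >= 2. *)

lemma matrix_inv_right_left:
  fixes A :: "real^'n^'n"
  assumes "invertible A"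
  shows "A ** matrix_inv A = mat 1" "matrix_inv A ** A = mat 1"
  using someI_ex[OF assms[unfolded invertible_def]] unfolding matrix_inv_def by auto

lemma matrix_inv_unique:
  fixes A B :: "real^'n^'n"
  assumes "A ** B = mat 1" "B ** A = mat 1"
  shows "matrix_inv A = B"
proof -
  have "invertible A" using assms invertible_def by blast
  have "matrix_inv A = matrix_inv A ** (A ** B)" using assms by simp
  also have "\<dots> = B" by (simp add: matrix_mul_assoc matrix_inv_right_left(2)[OF \<open>invertible A\<close>])
  finally show ?thesis .
qed

lemma diagm_mult_diagm: "diagm a ** diagm b = diagm (a * b)"
  unfolding diagm_def matrix_matrix_mult_def
  by (simp add: vec_eq_iff if_distrib[of "\<lambda>x. x * _"] cong: if_cong)

lemma diagm_one: "diagm 1 = mat 1"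
  unfolding diagm_def mat_def by (simp add: vec_eq_iff)

lemma mat_1_minus_diagm: "mat 1 - diagm a = diagm (1 - a)"
  unfolding diagm_def mat_def by (simp add: vec_eq_iff)

lemma diagm_mult_vector: "diagm a *v v = a * v"
  unfolding diagm_def matrix_vector_mult_def
  by (simp add: vec_eq_iff if_distrib[of "\<lambda>x. x * _"] cong: if_cong)

lemma matrix_inv_diagm:
  assumes "\<forall>i. a $ i \<noteq> 0"
  shows "matrix_inv (diagm a) = diagm (\<chi> i. 1 / a $ i)"
proof -
  have "a * (\<chi> i. 1 / a $ i) = 1" "(\<chi> i. 1 / a $ i) * a = 1"
    using assms by (simp_all add: vec_eq_iff)
  then show ?thesis
    by (intro matrix_inv_unique) (simp_all add: diagm_mult_diagm diagm_one)
qed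

lemma Wm_uniform: "Wm C (c *\<^sub>R ones) = c *\<^sub>R mat 1 + (1 - c) *\<^sub>R C"
  unfolding Wm_def diagm_def ones_def mat_def matrix_matrix_mult_def
  by (simp add: vec_eq_iff algebra_simps sum_subtractf if_distrib[of "\<lambda>x. _ * x"] cong: if_cong)

lemma transpose_Wm_uniform_mult:
  "transpose (Wm C (c *\<^sub>R ones)) *v v = c *\<^sub>R v + (1 - c) *\<^sub>R (transpose C *v v)"
  by (simp add: Wm_uniform vector_matrix_mult_add_rdistrib vector_scaleR_matrix_ac)

lemma row_stochastic_Wm_uniform:
  assumes "row_stochastic C" "0 \<le> c" "c \<le> 1"
  shows "row_stochastic (Wm C (c *\<^sub>R ones))"
  using assms unfolding row_stochastic_def Wm_uniform
  by (simp add: mat_def sum.distrib sum_distrib_left[symmetric])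

lemma sum_abs_transpose_stochastic_le:
  assumes "row_stochastic W"
  shows "(\<Sum>i\<in>UNIV. \<bar>(transpose W *v u) $ i\<bar>) \<le> (\<Sum>j\<in>UNIV. \<bar>u $ j\<bar>)"
proof -
  have nonneg: "0 \<le> W $ j $ i" for i j
    using assms unfolding row_stochastic_def by simp
  have "\<bar>(transpose W *v u) $ i\<bar> \<le> (\<Sum>j\<in>UNIV. W $ j $ i * \<bar>u $ j\<bar>)" for i
  proof -
    have "\<bar>(transpose W *v u) $ i\<bar> \<le> (\<Sum>j\<in>UNIV. \<bar>u $ j * W $ j $ i\<bar>)"
      unfolding transpose_matrix_vector vector_matrix_mult_def by simp
    also have "\<dots> = (\<Sum>j\<in>UNIV. W $ j $ i * \<bar>u $ j\<bar>)"
      using nonneg by (simp add: abs_mult mult.commute)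
    finally show ?thesis .
  qed
  then have "(\<Sum>i\<in>UNIV. \<bar>(transpose W *v u) $ i\<bar>) \<le> (\<Sum>i\<in>UNIV. \<Sum>j\<in>UNIV. W $ j $ i * \<bar>u $ j\<bar>)"
    by (intro sum_mono)
  also have "\<dots> = (\<Sum>j\<in>UNIV. (\<Sum>i\<in>UNIV. W $ j $ i) * \<bar>u $ j\<bar>)"
    by (subst sum.swap) (simp add: sum_distrib_right)
  also have "\<dots> = (\<Sum>j\<in>UNIV. \<bar>u $ j\<bar>)"
    using assms unfolding row_stochastic_def by simp
  finally show ?thesis .
qed

lemma invertible_mat_1_minus_transpose_stochastic_diagm:
  assumes W: "row_stochastic W" and \<theta>: "\<forall>i. 0 \<le> \<theta> $ i \<and> \<theta> $ i < 1"
  shows "invertible (mat 1 - transpose W ** diagm \<theta>)"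
proof -
  have "v = 0" if "(mat 1 - transpose W ** diagm \<theta>) *v v = 0" for v
  proof -
    have "(transpose W ** diagm \<theta>) *v v = transpose W *v (\<theta> * v)"
      by (metis matrix_vector_mul_assoc diagm_mult_vector)
    then have "v = transpose W *v (\<theta> * v)"
      using that by (simp add: matrix_vector_mult_diff_rdistrib del: transpose_matrix_vector)
    then have "(\<Sum>j\<in>UNIV. \<bar>v $ j\<bar>) \<le> (\<Sum>j\<in>UNIV. \<theta> $ j * \<bar>v $ j\<bar>)"
      using sum_abs_transpose_stochastic_le[OF W, of "\<theta> * v"] \<theta> by (simp add: abs_mult)
    then have "(\<Sum>j\<in>UNIV. (1 - \<theta> $ j) * \<bar>v $ j\<bar>) \<le> 0"
      by (simp add: left_diff_distrib sum_subtractf)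
    moreover have nonneg: "\<forall>j\<in>UNIV. 0 \<le> (1 - \<theta> $ j) * \<bar>v $ j\<bar>"
      using \<theta> by (simp add: less_imp_le)
    ultimately have "(\<Sum>j\<in>UNIV. (1 - \<theta> $ j) * \<bar>v $ j\<bar>) = 0"
      by (simp add: antisym sum_nonneg)
    then have "\<forall>j. (1 - \<theta> $ j) * \<bar>v $ j\<bar> = 0"
      using nonneg by (simp add: sum_nonneg_eq_0_iff)
    then show ?thesis using \<theta> by (simp add: vec_eq_iff) (metis less_irrefl)
  qed
  then show ?thesis
    using matrix_left_invertible_ker invertible_left_inverse by blast
qed

lemma mat_1_minus_transpose_Wm_uniform_mult:
  fixes C :: "real^'n^'n" and \<theta> :: "real^'n"
  assumes \<theta>: "\<forall>i. \<theta> $ i \<noteq> 1"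
  defines "z \<equiv> \<chi> i. \<theta> $ i / (1 - \<theta> $ i)"
  shows "(mat 1 - transpose (Wm C (c *\<^sub>R ones)) ** diagm \<theta>) *v (\<chi> i. c / (1 - \<theta> $ i))
           = c *\<^sub>R ones + (c * (1 - c)) *\<^sub>R (z - transpose C *v z)"
proof -
  let ?y = "\<chi> i. c / (1 - \<theta> $ i)"
  have y: "?y = c *\<^sub>R ones + c *\<^sub>R z" and \<theta>y: "\<theta> * ?y = c *\<^sub>R z"
    using \<theta> unfolding z_def ones_def by (simp_all add: vec_eq_iff field_simps)
  have "(mat 1 - transpose (Wm C (c *\<^sub>R ones)) ** diagm \<theta>) *v ?y
        = ?y - transpose (Wm C (c *\<^sub>R ones)) *v (c *\<^sub>R z)"
    by (simp add: algebra_simps diagm_mult_vector \<theta>y matrix_vector_mul_assoc[symmetric])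
  also have "\<dots> = c *\<^sub>R ones + (c * (1 - c)) *\<^sub>R (z - transpose C *v z)"
    unfolding y transpose_Wm_uniform_mult by (simp add: algebra_simps)
  finally show ?thesis .
qed

theorem corollary2:
  fixes C :: "real ^ 'n ^ 'n" and \<theta> :: "real ^ 'n"
  assumes "CARD('n) \<ge> 2"
    and "row_stochastic C"
    and "\<forall>i. C $ i $ i = 0"
    and "\<forall>i. 0 \<le> \<theta> $ i \<and> \<theta> $ i \<le> 1"
    and "\<forall>i. \<theta> $ i < 1"
    and "\<exists>j. \<theta> $ j > 0"
  shows "Fmap C \<theta> ((1 / real CARD('n)) *\<^sub>R ones) = (1 / real CARD('n)) *\<^sub>R ones
     \<longleftrightarrow>
     transpose C *v ((diagm \<theta> ** matrix_inv (mat 1 - diagm \<theta>)) *v ones)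
       = (diagm \<theta> ** matrix_inv (mat 1 - diagm \<theta>)) *v ones"
proof -
  define c where "c = 1 / real CARD('n)"
  define M where "M = mat 1 - transpose (Wm C (c *\<^sub>R ones)) ** diagm \<theta>"
  define y where "y = (\<chi> i. c / (1 - \<theta> $ i))"
  define z where "z = (\<chi> i. \<theta> $ i / (1 - \<theta> $ i))"
  have c: "0 < c" "c < 1" unfolding c_def using assms(1) by auto
  have \<theta>: "\<forall>i. 0 \<le> \<theta> $ i \<and> \<theta> $ i < 1" "\<forall>i. \<theta> $ i \<noteq> 1"
    using assms(4,5) by (auto simp: less_le)
  have M: "invertible M"
    unfolding M_def using c \<theta>(1) assms(2)
    by (intro invertible_mat_1_minus_transpose_stochastic_diagm row_stochastic_Wm_uniform) auto
  have residual: "M *v y = c *\<^sub>R ones + (c * (1 - c)) *\<^sub>R (z - transpose C *v z)"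
    unfolding M_def y_def z_def using \<theta>(2) by (rule mat_1_minus_transpose_Wm_uniform_mult)
  have z: "(diagm \<theta> ** matrix_inv (mat 1 - diagm \<theta>)) *v ones = z"
    using \<theta>(2) by (simp add: mat_1_minus_diagm matrix_inv_diagm diagm_mult_diagm diagm_mult_vector
        z_def ones_def vec_eq_iff divide_inverse)
  have "Fmap C \<theta> (c *\<^sub>R ones) = c *\<^sub>R ones \<longleftrightarrow> (1 - \<theta>) * (matrix_inv M *v (c *\<^sub>R ones)) = c *\<^sub>R ones"
    unfolding Fmap_def M_def c_def mat_1_minus_diagm diagm_mult_vector ..
  also have "\<dots> \<longleftrightarrow> matrix_inv M *v (c *\<^sub>R ones) = y"
    using \<theta>(2) by (auto simp: y_def ones_def vec_eq_iff field_simps)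
  also have "\<dots> \<longleftrightarrow> M *v y = c *\<^sub>R ones"
    using matrix_inv_right_left[OF M] by (metis matrix_vector_mul_assoc matrix_vector_mul_lid)
  also have "\<dots> \<longleftrightarrow> (c * (1 - c)) *\<^sub>R (z - transpose C *v z) = 0"
    by (simp add: residual)
  also have "\<dots> \<longleftrightarrow> transpose C *v z = z"
    using c by (auto simp del: transpose_matrix_vector)
  finally show ?thesis
    unfolding z c_def .
qed

end
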